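(* Let $P=(T;U,V)$ be a 3M-DAP with $r_v := s_u u - (t-2)s_t - (v-2)s_v > 0$ and such that $b^* := 2s_v/r_v$ is an integer. Then $f(P) = x_u/u$, and there exists an optimal feasible solution in which every entry of $V$ is strictly greater than $x_u/u$.
   Context: A three-matrix division and assignment problem (3M-DAP) $P=(T;U,V)$ is specified by integers $t,u,v$ (numbers of columns), integers $s_t, s_u, s_v$ (numbers of rows) and rationals $x_t, x_u, x_v$ (required row sums), subject to: $t \ge 2$, $u \ge 2$, $v \ge 1$; if $v = 1$ then $v s_v \le (t-2)s_t$; $s_t > 0$, $s_u > 0$, $s_v \ge 0$; $s_u u + s_v v = s_t t$; $s_u x_u + s_v x_v = s_t x_t$; and $x_u/u < x_v/v$. A feasible solution assigns real values to the entries of an $s_t\times t$ matrix $T$, an $s_u \times u$ matrix $U$ and an $s_v \times v$ matrix $V$ so that every row of $T$, $U$, $V$ sums to $x_t$, $x_u$, $x_v$ respectively, and the multiset of entries of $T$ equals the multiset union of the entries of $U$ and $V$. $f(P)$ is the maximum, over feasible solutions, of the smallest entry of $T$; a feasible solution attaining it is optimal. *)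

theory Defs
  imports Complex_Main "HOL-Library.Multiset"
begin

text \<open>A 3M-DAP P = (T;U,V) is given by the column numbers t u v, row numbers st su sv
  and rational row sums xt xu xv. Matrices are functions nat => nat => real,
  indexed by row i < (number of rows) and column j < (number of columns).\<close>

definition is_3MDAP ::
  "nat \<Rightarrow> nat \<Rightarrow> nat \<Rightarrow> nat \<Rightarrow> nat \<Rightarrow> nat \<Rightarrow> rat \<Rightarrow> rat \<Rightarrow> rat \<Rightarrow> bool" where
  "is_3MDAP t u v st su sv xt xu xv \<longleftrightarrow>
     t \<ge> 2 \<and> u \<ge> 2 \<and> v \<ge> 1 \<and>
     (v = 1 \<longrightarrow> v * sv \<le> (t - 2) * st) \<and>
     st > 0 \<and> su > 0 \<and>
     su * u + sv * v = st * t \<and>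
     of_nat su * xu + of_nat sv * xv = of_nat st * xt \<and>
     xu / of_nat u < xv / of_nat v"

definition entries :: "nat \<Rightarrow> nat \<Rightarrow> (nat \<Rightarrow> nat \<Rightarrow> real) \<Rightarrow> real multiset" where
  "entries s c M = image_mset (\<lambda>(i, j). M i j) (mset_set ({0..<s} \<times> {0..<c}))"

definition rows_sum :: "nat \<Rightarrow> nat \<Rightarrow> (nat \<Rightarrow> nat \<Rightarrow> real) \<Rightarrow> real \<Rightarrow> bool" where
  "rows_sum s c M x \<longleftrightarrow> (\<forall>i<s. (\<Sum>j<c. M i j) = x)"

definition feasible_3MDAP ::
  "nat \<Rightarrow> nat \<Rightarrow> nat \<Rightarrow> nat \<Rightarrow> nat \<Rightarrow> nat \<Rightarrow> rat \<Rightarrow> rat \<Rightarrow> rat \<Rightarrow>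
   (nat \<Rightarrow> nat \<Rightarrow> real) \<Rightarrow> (nat \<Rightarrow> nat \<Rightarrow> real) \<Rightarrow> (nat \<Rightarrow> nat \<Rightarrow> real) \<Rightarrow> bool" where
  "feasible_3MDAP t u v st su sv xt xu xv T U V \<longleftrightarrow>
     rows_sum st t T (real_of_rat xt) \<and>
     rows_sum su u U (real_of_rat xu) \<and>
     rows_sum sv v V (real_of_rat xv) \<and>
     entries st t T = entries su u U + entries sv v V"

definition min_entry :: "nat \<Rightarrow> nat \<Rightarrow> (nat \<Rightarrow> nat \<Rightarrow> real) \<Rightarrow> real" where
  "min_entry s c M = Min ((\<lambda>(i, j). M i j) ` ({0..<s} \<times> {0..<c}))"

definition f_3MDAP ::
  "nat \<Rightarrow> nat \<Rightarrow> nat \<Rightarrow> nat \<Rightarrow> nat \<Rightarrow> nat \<Rightarrow> rat \<Rightarrow> rat \<Rightarrow> rat \<Rightarrow> real" where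
  "f_3MDAP t u v st su sv xt xu xv =
     (GREATEST m. \<exists>T U V. feasible_3MDAP t u v st su sv xt xu xv T U V \<and>
                            m = min_entry st t T)"

definition optimal_3MDAP ::
  "nat \<Rightarrow> nat \<Rightarrow> nat \<Rightarrow> nat \<Rightarrow> nat \<Rightarrow> nat \<Rightarrow> rat \<Rightarrow> rat \<Rightarrow> rat \<Rightarrow>
   (nat \<Rightarrow> nat \<Rightarrow> real) \<Rightarrow> (nat \<Rightarrow> nat \<Rightarrow> real) \<Rightarrow> (nat \<Rightarrow> nat \<Rightarrow> real) \<Rightarrow> bool" where
  "optimal_3MDAP t u v st su sv xt xu xv T U V \<longleftrightarrow>
     feasible_3MDAP t u v st su sv xt xu xv T U V \<and>
     min_entry st t T = f_3MDAP t u v st su sv xt xu xv"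

end

theory Submission
  imports Defs
begin

(* Every row of U has an entry of at most its average x_u/u, and that entry also occurs in T,
   so f(P) <= x_u/u. For the converse, fill U with a = x_u/u and take T = a + w P, V = a + w Q
   for w > 0 and nonnegative integer matrices P, Q with constant row sums whose entries agree
   up to the s_u u zeros that become U. Since r_v = 2 (s_t - (v - 1) s_v), integrality of
   b = b* gives s_v = d b and s_t = d (b (v - 1) + 1), so it suffices to build one block of
   b (v - 1) + 1 rows of P and b rows of Q and to repeat it d times. For v = 1 each row of P
   has b ones; for v >= 2 a staircase works: P has the rows (r, b - r, 0, ..., 0) for r <= b
   and (0, b, 0, ..., 0) otherwise, Q has the rows (b - j, j + 1, b, ..., b) for j < b. *)

lemma entries_Suc:
  "entries (Suc s) c M = entries s c M + image_mset (M s) (mset_set {..<c})"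
proof -
  have "{0..<Suc s} \<times> {0..<c} = ({0..<s} \<times> {0..<c}) \<union> (Pair s ` {..<c})" by auto
  moreover have "({0..<s} \<times> {0..<c}) \<inter> (Pair s ` {..<c}) = {}" by auto
  moreover have "mset_set (Pair s ` {..<c}) = image_mset (Pair s) (mset_set {..<c})"
    by (simp add: image_mset_mset_set inj_on_def)
  ultimately show ?thesis
    unfolding entries_def by (simp add: mset_set_Union multiset.map_comp comp_def)
qed

lemma entries_eq_sum_rows: "entries s c M = (\<Sum>i<s. image_mset (M i) (mset_set {..<c}))"
proof (induction s)
  case 0
  then show ?case by (simp add: entries_def)
next
  case (Suc s)
  then show ?case by (simp add: entries_Suc)
qed

lemma entries_map: "entries s c (\<lambda>i j. f (M i j)) = image_mset f (entries s c M)"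
  unfolding entries_def by (simp add: multiset.map_comp comp_def prod.case_distrib)

lemma entries_const: "entries s c (\<lambda>_ _. x) = replicate_mset (s * c) x"
proof -
  have "(\<lambda>(i::nat, j::nat). x) = (\<lambda>_. x)" by auto
  then show ?thesis unfolding entries_def by (simp add: image_mset_const_eq)
qed

lemma in_entries_iff: "y \<in># entries s c M \<longleftrightarrow> (\<exists>i<s. \<exists>j<c. M i j = y)"
  unfolding entries_def by force

lemma min_entry_eq_Min_mset: "min_entry s c M = Min_mset (entries s c M)"
  unfolding min_entry_def entries_def by simp

definition of_rows :: "nat list list \<Rightarrow> nat \<Rightarrow> nat \<Rightarrow> real" where
  "of_rows L i j = real (L ! i ! j)"

lemma entries_of_rows:
  assumes "\<forall>row\<in>set L. length row = c"
  shows "entries (length L) c (of_rows L) = mset (map real (concat L))"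
proof -
  have "image_mset (of_rows L i) (mset_set {..<c}) = mset (map real (L ! i))" if "i < length L" for i
  proof -
    have "image_mset (of_rows L i) (mset_set {..<c}) = mset (map (of_rows L i) [0..<c])"
      by (simp flip: atLeast0LessThan)
    also have "map (of_rows L i) [0..<c] = map real (L ! i)"
      using assms that by (simp add: of_rows_def list_eq_iff_nth_eq)
    finally show ?thesis .
  qed
  then have "entries (length L) c (of_rows L) = (\<Sum>i<length L. mset (map real (L ! i)))"
    unfolding entries_eq_sum_rows by simp
  also have "\<dots> = mset (map real (concat L))"
    by (simp add: mset_concat map_concat sum_list_sum_nth atLeast0LessThan)
  finally show ?thesis .
qed

lemma rows_sum_of_rows:
  assumes "\<forall>row\<in>set L. length row = c \<and> sum_list row = p"
  shows "rows_sum (length L) c (of_rows L) (real p)"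
  unfolding rows_sum_def
proof (intro allI impI)
  fix i assume "i < length L"
  then have "length (L ! i) = c" "sum_list (L ! i) = p" using assms by auto
  then have "(\<Sum>j<c. L ! i ! j) = p" by (simp add: sum_list_sum_nth atLeast0LessThan)
  then show "(\<Sum>j<c. of_rows L i j) = real p"
    unfolding of_rows_def by (simp flip: of_nat_sum)
qed

lemma rows_sum_affine:
  "rows_sum s c M x \<Longrightarrow> rows_sum s c (\<lambda>i j. a + w * M i j) (real c * a + w * x)"
  unfolding rows_sum_def by (simp add: sum.distrib flip: sum_distrib_left)

lemma min_entry_le: "y \<in># entries s c M \<Longrightarrow> min_entry s c M \<le> y"
  unfolding min_entry_eq_Min_mset by simp

lemma min_entry_eqI:
  "x \<in># entries s c M \<Longrightarrow> (\<And>y. y \<in># entries s c M \<Longrightarrow> x \<le> y) \<Longrightarrow> min_entry s c M = x"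
  unfolding min_entry_eq_Min_mset by (intro Min_eqI) auto

lemma min_entry_of_constant_U:
  assumes "entries st t T = entries su u (\<lambda>_ _. a) + entries sv v V" "su > 0" "u > 0"
    and "\<forall>i<sv. \<forall>j<v. a < V i j"
  shows "min_entry st t T = a"
proof (rule min_entry_eqI)
  show "a \<in># entries st t T" using assms(1-3) by (simp add: entries_const)
next
  fix y assume "y \<in># entries st t T"
  then show "a \<le> y"
    using assms(1,4) by (force simp: entries_const in_entries_iff split: if_splits)
qed

lemma rows_sum_entry_le_average:
  assumes "rows_sum s c M x" "i < s" "c > 0"
  obtains j where "j < c" "M i j \<le> x / c"
proof -
  have "\<not> (\<forall>j<c. x / c < M i j)"
  proof
    assume "\<forall>j<c. x / c < M i j"
    then have "(\<Sum>j<c. x / c) < (\<Sum>j<c. M i j)"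
      using assms(3) by (intro sum_strict_mono) auto
    then show False using assms unfolding rows_sum_def by simp
  qed
  then show ?thesis using that by (auto simp: not_less)
qed

lemma feasible_min_entry_le:
  assumes "feasible_3MDAP t u v st su sv xt xu xv T U V" "su > 0" "u > 0"
  shows "min_entry st t T \<le> real_of_rat (xu / of_nat u)"
proof -
  have U: "rows_sum su u U (real_of_rat xu)"
    and TUV: "entries st t T = entries su u U + entries sv v V"
    using assms(1) unfolding feasible_3MDAP_def by auto
  obtain j where "j < u" "U 0 j \<le> real_of_rat xu / real u"
    using rows_sum_entry_le_average[OF U assms(2,3)] .
  moreover have "U 0 j \<in># entries st t T"
    using \<open>j < u\<close> assms(2) in_entries_iff[of _ su u U] unfolding TUV by auto
  ultimately show ?thesis
    using min_entry_le[of "U 0 j" st t T] by (simp add: of_rat_divide)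
qed

lemma f_3MDAP_eqI:
  assumes "feasible_3MDAP t u v st su sv xt xu xv T U V" "min_entry st t T = m"
    and "\<And>T U V. feasible_3MDAP t u v st su sv xt xu xv T U V \<Longrightarrow> min_entry st t T \<le> m"
  shows "f_3MDAP t u v st su sv xt xu xv = m"
  unfolding f_3MDAP_def
proof (rule Greatest_equality)
  show "\<exists>T U V. feasible_3MDAP t u v st su sv xt xu xv T U V \<and> m = min_entry st t T"
    using assms(1,2) by metis
next
  fix y assume "\<exists>T U V. feasible_3MDAP t u v st su sv xt xu xv T U V \<and> y = min_entry st t T"
  then show "y \<le> m" using assms(3) by blast
qed

(* Row lists of the integer matrices P and Q; the n zeros of P are the entries that become U. *)
definition dap_pattern ::
  "nat \<Rightarrow> nat \<Rightarrow> nat \<Rightarrow> nat \<Rightarrow> nat \<Rightarrow> nat list list \<Rightarrow> nat list list \<Rightarrow> bool" where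
  "dap_pattern t v n p q PT PV \<longleftrightarrow>
     (\<forall>row\<in>set PT. length row = t \<and> sum_list row = p) \<and>
     (\<forall>row\<in>set PV. length row = v \<and> sum_list row = q \<and> 0 \<notin> set row) \<and>
     mset (concat PT) = replicate_mset n 0 + mset (concat PV)"

lemma dap_pattern_balance:
  assumes "dap_pattern t v n p q PT PV"
  shows "length PT * p = length PV * q"
proof -
  have row_total: "sum_list (concat L) = length L * r" if "\<forall>row\<in>set L. sum_list row = r" for L r
    using that by (induction L) auto
  have "mset (concat PT) = replicate_mset n 0 + mset (concat PV)"
    using assms unfolding dap_pattern_def by blast
  then have "sum_list (concat PT) = sum_list (concat PV)"
    by (metis add_0 sum_mset_sum_list sum_mset.union sum_mset_replicate_mset mult_zero_right)
  moreover have "sum_list (concat PT) = length PT * p" "sum_list (concat PV) = length PV * q"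
    using assms unfolding dap_pattern_def by (auto intro!: row_total)
  ultimately show ?thesis by simp
qed

lemma mset_concat_replicate: "mset (concat (replicate d xs)) = repeat_mset d (mset xs)"
  by (induction d) simp_all

lemma dap_pattern_repeat:
  assumes "dap_pattern t v n p q PT PV"
  shows "dap_pattern t v (d * n) p q (concat (replicate d PT)) (concat (replicate d PV))"
proof -
  have "concat (concat (replicate d L)) = concat (replicate d (concat L))" for L :: "nat list list"
    by (induction d) simp_all
  moreover have "repeat_mset d (replicate_mset n 0) = replicate_mset (d * n) (0::nat)"
    by (simp add: multiset_eq_iff)
  ultimately show ?thesis
    using assms unfolding dap_pattern_def by (auto simp: mset_concat_replicate)
qed

lemma uniform_dap_pattern:
  assumes "b \<le> t"
  shows "dap_pattern t 1 (t - b) b 1 [replicate b 1 @ replicate (t - b) 0] (replicate b [1])"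
  using assms unfolding dap_pattern_def by (simp add: sum_list_replicate)

lemma mset_map_reflect_upt:
  assumes "n \<le> Suc k"
  shows "mset (map (\<lambda>i. k - i) [0..<n]) = mset [Suc k - n..<Suc k]"
proof -
  have "(\<lambda>i. k - i) ` {0..<n} = {Suc k - n..<Suc k}"
  proof (intro equalityI subsetI)
    fix x assume "x \<in> {Suc k - n..<Suc k}"
    then have "x = k - (k - x)" "k - x \<in> {0..<n}" using assms by auto
    then show "x \<in> (\<lambda>i. k - i) ` {0..<n}" by blast
  qed (use assms in auto)
  moreover have "inj_on (\<lambda>i. k - i) {0..<n}"
    using assms by (auto simp: inj_on_def)
  ultimately show ?thesis
    by (subst set_eq_iff_mset_eq_distinct[symmetric]) (auto simp: distinct_map)
qed

lemma mset_concat_map_two_heads: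
  "mset (concat (map (\<lambda>x. [f x, g x] @ z) xs)) =
     mset (map f xs) + mset (map g xs) + repeat_mset (length xs) (mset z)"
  by (induction xs) simp_all

definition staircase_T_rows :: "nat \<Rightarrow> nat \<Rightarrow> nat \<Rightarrow> nat list list" where
  "staircase_T_rows t v b =
     map (\<lambda>r. [r, b - r] @ replicate (t - 2) 0) [0..<Suc b] @
     replicate (b * (v - 2)) ([0, b] @ replicate (t - 2) 0)"

definition staircase_V_rows :: "nat \<Rightarrow> nat \<Rightarrow> nat list list" where
  "staircase_V_rows v b = map (\<lambda>j. [b - j, Suc j] @ replicate (v - 2) b) [0..<b]"

(* Each of 1, ..., b occurs twice on both sides: in the T rows r <= b as r and b - r, in the
   V rows j < b as b - j and j + 1. Both sides also contain b (v - 2) copies of b. *)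
lemma mset_concat_staircase_rows:
  assumes "t \<ge> 2" "v \<ge> 2"
  shows "mset (concat (staircase_T_rows t v b)) =
    replicate_mset ((b * (v - 1) + 1) * t - b * v) 0 + mset (concat (staircase_V_rows v b))"
proof -
  define K where "K = b * (v - 2)"
  obtain t' v' where t': "t = t' + 2" and v': "v = v' + 2"
    using assms by (metis add.commute le_Suc_ex)
  have zeros: "(b * (v - 1) + 1) * t - b * v = 2 + Suc b * (t - 2) + K + K * (t - 2)"
  proof -
    have "(b * (v - 1) + 1) * t = b * v + (2 + Suc b * (t - 2) + K + K * (t - 2))"
      unfolding K_def t' v' by (simp add: algebra_simps)
    then show ?thesis by simp
  qed
  define Z where "Z = replicate (t - 2) (0::nat)"
  define Y where "Y = replicate (v - 2) b"
  define I where "I = mset [0..<Suc b]"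
  define J where "J = mset [1..<Suc b]"
  have T_mset: "mset (concat (staircase_T_rows t v b)) =
      I + I + repeat_mset (Suc b) (mset Z) + repeat_mset K (mset ([0, b] @ Z))"
  proof -
    have "mset (map (\<lambda>r. b - r) [0..<Suc b]) = mset [0..<Suc b]"
      using mset_map_reflect_upt[of "Suc b" b] by simp
    then show ?thesis
      unfolding staircase_T_rows_def Z_def[symmetric] K_def[symmetric] I_def
      by (simp only: concat_append mset_append mset_concat_map_two_heads mset_concat_replicate
          map_ident length_upt diff_zero)
  qed
  have V_mset: "mset (concat (staircase_V_rows v b)) = J + J + repeat_mset b (mset Y)"
  proof -
    have "mset (map (\<lambda>j. b - j) [0..<b]) = J"
      using mset_map_reflect_upt[of b b] unfolding J_def by simp
    moreover have "mset (map Suc [0..<b]) = J" unfolding J_def map_Suc_upt by simp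
    ultimately show ?thesis
      unfolding staircase_V_rows_def Y_def[symmetric]
      by (simp only: mset_concat_map_two_heads length_upt diff_zero)
  qed
  have I: "I = add_mset 0 J"
    unfolding I_def J_def by (simp only: upt_conv_Cons[OF zero_less_Suc] mset.simps One_nat_def)
  show ?thesis
    unfolding T_mset V_mset I zeros Z_def Y_def K_def by (simp add: multiset_eq_iff t' v' algebra_simps)
qed

lemma staircase_dap_pattern:
  fixes t v b :: nat
  assumes "t \<ge> 2" "v \<ge> 2"
  defines "m \<equiv> b * (v - 1) + 1"
  shows "dap_pattern t v (m * t - b * v) b m (staircase_T_rows t v b) (staircase_V_rows v b)"
    and "length (staircase_T_rows t v b) = m" "length (staircase_V_rows v b) = b"
proof -
  obtain v' where v': "v = v' + 2"
    using assms(2) by (metis add.commute le_Suc_ex)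
  have "\<forall>row\<in>set (staircase_T_rows t v b). length row = t \<and> sum_list row = b"
    using assms(1) unfolding staircase_T_rows_def by auto
  moreover have "\<forall>row\<in>set (staircase_V_rows v b). length row = v \<and> sum_list row = m \<and> 0 \<notin> set row"
    unfolding staircase_V_rows_def m_def v' by (auto simp: sum_list_replicate algebra_simps)
  ultimately show "dap_pattern t v (m * t - b * v) b m (staircase_T_rows t v b) (staircase_V_rows v b)"
    using mset_concat_staircase_rows[OF assms(1,2)] unfolding dap_pattern_def m_def by blast
  show "length (staircase_T_rows t v b) = m" "length (staircase_V_rows v b) = b"
    unfolding staircase_T_rows_def staircase_V_rows_def m_def v' by simp_all
qed

lemma feasible_of_dap_pattern:
  fixes t u v st su sv :: nat and xt xu xv :: rat
  assumes dap: "is_3MDAP t u v st su sv xt xu xv"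
    and pattern: "dap_pattern t v (su * u) p q PT PV" "length PT = st" "length PV = sv"
    and "q > 0"
  defines "a \<equiv> real_of_rat (xu / of_nat u)"
  obtains T V where "feasible_3MDAP t u v st su sv xt xu xv T (\<lambda>_ _. a) V"
    and "\<forall>i<sv. \<forall>j<v. a < V i j"
proof -
  define XT XU XV where "XT = real_of_rat xt" and "XU = real_of_rat xu" and "XV = real_of_rat xv"
  have "st > 0" "u > 0" "v > 0" and counts_nat: "su * u + sv * v = st * t"
    and sums_rat: "of_nat su * xu + of_nat sv * xv = of_nat st * xt"
    and less_rat: "xu / of_nat u < xv / of_nat v"
    using dap unfolding is_3MDAP_def by auto
  have counts: "real su * real u + real sv * real v = real st * real t"
    using arg_cong[where f = real, OF counts_nat] by simp
  have sums: "real su * XU + real sv * XV = real st * XT"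
    using arg_cong[where f = real_of_rat, OF sums_rat] unfolding XT_def XU_def XV_def
    by (simp add: of_rat_add of_rat_mult)
  have "a < real_of_rat (xv / of_nat v)"
    using less_rat unfolding a_def of_rat_less .
  then have "a < XV / real v"
    unfolding XV_def by (simp add: of_rat_divide)
  define w where "w = (XV - real v * a) / real q"
  have "w > 0"
    using \<open>a < XV / real v\<close> \<open>v > 0\<close> \<open>q > 0\<close> unfolding w_def by (simp add: field_simps)
  have XU: "XU = real u * a"
    using \<open>u > 0\<close> unfolding a_def XU_def by (simp add: of_rat_divide)
  have XV: "XV = real v * a + real q * w"
    using \<open>q > 0\<close> unfolding w_def by simp
  have balance: "real st * real p = real sv * real q"
    using arg_cong[where f = real, OF dap_pattern_balance[OF pattern(1)]] pattern(2,3) by simp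
  have "real st * XT = (real su * real u + real sv * real v) * a + real sv * real q * w"
    using sums unfolding XU XV by (simp add: algebra_simps)
  also have "\<dots> = real st * (real t * a + real p * w)"
    unfolding counts balance[symmetric] by (simp add: algebra_simps)
  finally have XT: "XT = real t * a + real p * w"
    using \<open>st > 0\<close> by simp
  define T where "T = (\<lambda>i j. a + w * of_rows PT i j)"
  define V where "V = (\<lambda>i j. a + w * of_rows PV i j)"
  have rows: "\<forall>row\<in>set PT. length row = t \<and> sum_list row = p"
    "\<forall>row\<in>set PV. length row = v \<and> sum_list row = q \<and> 0 \<notin> set row"
    and entries: "mset (concat PT) = replicate_mset (su * u) 0 + mset (concat PV)"
    using pattern(1) unfolding dap_pattern_def by blast+
  show ?thesis
  proof
    have "rows_sum st t T XT"
      using rows_sum_affine[OF rows_sum_of_rows[OF rows(1)]] pattern(2)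
      unfolding T_def XT by (simp add: mult.commute)
    moreover have "rows_sum su u (\<lambda>_ _. a) XU"
      unfolding rows_sum_def XU by simp
    moreover have "rows_sum sv v V XV"
      using rows_sum_affine[OF rows_sum_of_rows, of PV v q] rows(2) pattern(3)
      unfolding V_def XV by (simp add: mult.commute)
    moreover have "entries st t T = entries su u (\<lambda>_ _. a) + entries sv v V"
    proof -
      have affine: "entries (length L) c (\<lambda>i j. a + w * of_rows L i j) =
          image_mset (\<lambda>n. a + w * real n) (mset (concat L))" if "\<forall>row\<in>set L. length row = c" for L c
        using entries_map[where f = "\<lambda>x. a + w * x" and M = "of_rows L"] entries_of_rows[OF that]
        by (simp add: multiset.map_comp comp_def)
      show ?thesis
        using affine[of PT t] affine[of PV v] rows pattern(2,3)
        unfolding T_def V_def entries entries_const by simp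
    qed
    ultimately show "feasible_3MDAP t u v st su sv xt xu xv T (\<lambda>_ _. a) V"
      unfolding feasible_3MDAP_def XT_def[symmetric] XU_def[symmetric] XV_def[symmetric] by blast
  next
    show "\<forall>i<sv. \<forall>j<v. a < V i j"
    proof (intro allI impI)
      fix i j assume "i < sv" "j < v"
      then have "PV ! i \<in> set PV" "j < length (PV ! i)" using rows(2) pattern(3) by auto
      then have "PV ! i ! j \<in> set (PV ! i)" "0 \<notin> set (PV ! i)" using rows(2) by auto
      then have "PV ! i ! j > 0" by (metis gr0I)
      then show "a < V i j" using \<open>w > 0\<close> unfolding V_def of_rows_def by simp
    qed
  qed
qed

lemma block_counts_of_integral_b_star:
  fixes t u v st su sv :: nat
  assumes "v \<ge> 1" "su * u + sv * v = st * t"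
    and "int su * int u - (int t - 2) * int st - (int v - 2) * int sv > 0"
    and "2 * real sv / real_of_int (int su * int u - (int t - 2) * int st - (int v - 2) * int sv) \<in> \<int>"
  obtains b d where "d > 0" "sv = d * b" "st = d * (b * (v - 1) + 1)"
proof -
  define D where "D = int st - (int v - 1) * int sv"
  have "int su * int u = int st * int t - int sv * int v"
    using arg_cong[where f = int, OF assms(2)] by simp
  then have r_v: "int su * int u - (int t - 2) * int st - (int v - 2) * int sv = 2 * D"
    unfolding D_def by (simp add: algebra_simps)
  then have "D > 0" using assms(3) by simp
  obtain k where "2 * real sv / real_of_int (2 * D) = of_int k"
    using assms(4) unfolding r_v by (auto elim: Ints_cases)
  then have "real sv = of_int (k * D)" using \<open>D > 0\<close> by (simp add: field_simps)
  then have sv: "int sv = k * D" by linarith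
  then have "0 \<le> k * D" by (metis of_nat_0_le_iff)
  then have "k \<ge> 0" using \<open>D > 0\<close> by (simp add: zero_le_mult_iff)
  then obtain b where b: "k = int b" by (metis nonneg_int_cases)
  obtain d where d: "D = int d" using \<open>D > 0\<close> by (metis less_imp_le nonneg_int_cases)
  have "int st = int sv * (int v - 1) + D" unfolding D_def by simp
  also have "\<dots> = int d * (int b * (int v - 1) + 1)"
    unfolding sv b d by (simp add: algebra_simps)
  also have "\<dots> = int (d * (b * (v - 1) + 1))"
    using assms(1) by (simp only: of_nat_mult of_nat_add of_nat_1 of_nat_diff)
  finally have "st = d * (b * (v - 1) + 1)" by (simp only: of_nat_eq_iff)
  moreover have "sv = d * b" using sv unfolding b d by (simp flip: of_nat_mult)
  moreover have "d > 0" using \<open>D > 0\<close> d by simp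
  ultimately show ?thesis using that by blast
qed

lemma dap_pattern_exists:
  assumes "t \<ge> 2" "v \<ge> 1" "d > 0" "su * u + sv * v = st * t"
    and "sv = d * b" "st = d * (b * (v - 1) + 1)"
  obtains PT PV where "dap_pattern t v (su * u) b (b * (v - 1) + 1) PT PV"
    and "length PT = st" "length PV = sv"
proof -
  define m where "m = b * (v - 1) + 1"
  obtain PT PV where block: "dap_pattern t v (m * t - b * v) b m PT PV"
    and len: "length PT = m" "length PV = b"
  proof (cases "v = 1")
    case True
    then have "su * u + d * b = d * t" using assms(4-6) by simp
    then have "d * b \<le> d * t" by linarith
    then have "b \<le> t" using assms(3) by simp
    then show ?thesis
      using that uniform_dap_pattern[of b t] unfolding m_def True by simp
  next
    case False
    then show ?thesis
      using that staircase_dap_pattern[of t v b] assms(1,2) unfolding m_def by simp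
  qed
  have "su * u = d * (m * t - b * v)"
    using assms(4-6) unfolding m_def by (simp add: diff_mult_distrib2 algebra_simps)
  then show ?thesis
    using that dap_pattern_repeat[OF block, of d] len assms(5,6)
    unfolding m_def by (simp add: length_concat sum_list_replicate mult.commute)
qed

theorem theorem5:
  fixes t u v st su sv :: nat and xt xu xv :: rat
  assumes "is_3MDAP t u v st su sv xt xu xv"
    and "int su * int u - (int t - 2) * int st - (int v - 2) * int sv > 0"
    and "2 * real sv / real_of_int (int su * int u - (int t - 2) * int st - (int v - 2) * int sv) \<in> \<int>"
  shows "(\<forall>T U V. feasible_3MDAP t u v st su sv xt xu xv T U V \<longrightarrow>
              min_entry st t T \<le> real_of_rat (xu / of_nat u))
       \<and> f_3MDAP t u v st su sv xt xu xv = real_of_rat (xu / of_nat u)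
       \<and> (\<exists>T U V. optimal_3MDAP t u v st su sv xt xu xv T U V \<and>
              (\<forall>i<sv. \<forall>j<v. V i j > real_of_rat (xu / of_nat u)))"
proof -
  define a where "a = real_of_rat (xu / of_nat u)"
  have "t \<ge> 2" "v \<ge> 1" "su > 0" "u > 0" and counts: "su * u + sv * v = st * t"
    using assms(1) unfolding is_3MDAP_def by auto
  obtain b d where "d > 0" "sv = d * b" "st = d * (b * (v - 1) + 1)"
    using block_counts_of_integral_b_star[OF \<open>v \<ge> 1\<close> counts assms(2,3)] .
  then obtain PT PV where pattern: "dap_pattern t v (su * u) b (b * (v - 1) + 1) PT PV"
    and "length PT = st" "length PV = sv"
    using dap_pattern_exists \<open>t \<ge> 2\<close> \<open>v \<ge> 1\<close> counts by metis
  then obtain T V where feasible: "feasible_3MDAP t u v st su sv xt xu xv T (\<lambda>_ _. a) V"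
    and V: "\<forall>i<sv. \<forall>j<v. a < V i j"
    using feasible_of_dap_pattern[OF assms(1) pattern] zero_less_Suc unfolding a_def by auto
  have upper: "\<forall>T U V. feasible_3MDAP t u v st su sv xt xu xv T U V \<longrightarrow> min_entry st t T \<le> a"
    using feasible_min_entry_le \<open>su > 0\<close> \<open>u > 0\<close> unfolding a_def by blast
  have min: "min_entry st t T = a"
    using min_entry_of_constant_U feasible V \<open>su > 0\<close> \<open>u > 0\<close>
    unfolding feasible_3MDAP_def by blast
  have f: "f_3MDAP t u v st su sv xt xu xv = a"
    using f_3MDAP_eqI[OF feasible min] upper by blast
  have "optimal_3MDAP t u v st su sv xt xu xv T (\<lambda>_ _. a) V"
    unfolding optimal_3MDAP_def using feasible min f by simp
  then show ?thesis
    using upper f V unfolding a_def by blast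
qed

end
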